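(* Let $n\ge 2$, let $a_1,\dots,a_n$ be distinct real numbers, and let $F(a)=\sum_{k=0}^n A_k a^k=\prod_{i=1}^n(a-a_i)$ (so $A_n=1$). Fix signs $\epsilon_i\in\{\pm1\}$ and real numbers $\xi_1,\dots,\xi_n$, put $\Delta_i=\epsilon_i(a-a_i)$ and $$x(a)=\sum_{i=1}^n\frac{\xi_i}{\sqrt{\Delta_i}},$$ and work on an open interval $I\subset(0,\infty)$ on which all $\Delta_i>0$ and $\dot x=dx/da\neq0$. On $M=I\times\mathbb{R}$ with coordinates $(a,y)$ consider $$H=\Pi^2+a\,P_y^2,\qquad \Pi=\frac{a}{\dot x}\,P_a .$$ Define $$G=\sum_{k=0}^n A_{n-k}H^{n-k}P_y^{2k},\quad Q_1=\sum_{k=1}^n\tilde b_k\,H^{n-k}\,\Pi\,P_y^{2k-1},\quad Q_2=\sum_{k=1}^n\tilde c_k\,H^{n-k}P_y^{2k},$$ where for $k=1,\dots,n$ $$\tilde b_k=(-1)^k\sum_{i=1}^n\frac{\xi_i}{\sqrt{\Delta_i}}\,\sigma^i_{k-1},\qquad \tilde c_k=\frac{(-1)^{k+1}}{2}\Big(\sum_{i=1}^n\frac{\xi_i^2}{\Delta_i}\sigma^i_{k-1}+\sum_{i\neq j}\frac{\xi_i\xi_j}{\sqrt{\Delta_i\Delta_j}}\big(\sigma^{ij}_{k-1}+a\,\sigma^{ij}_{k-2}\big)\Big),$$ and set $$S_1=Q_1+y\,G,\qquad S_2=Q_2+y\,Q_1+\frac{y^2}{2}G .$$ Then $\{H,P_y\}=\{H,S_1\}=\{H,S_2\}=0$,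 and each of the triples $(H,P_y,S_1)$ and $(H,P_y,S_2)$ is functionally independent (i.e. $dH\wedge dP_y\wedge dS_1$ and $dH\wedge dP_y\wedge dS_2$ do not vanish identically). Thus $\{H,P_y,S_1\}$ and $\{H,P_y,S_2\}$ are two maximally superintegrable systems.
   Context: $\{\cdot,\cdot\}$ is the canonical Poisson bracket on $T^*M$, $(P_a,P_y)$ being the momenta conjugate to $(a,y)$; $H$ is the geodesic Hamiltonian of the metric $g=\dot x^2a^{-2}da^2+a^{-1}dy^2$. The symmetric functions of the roots are defined as follows: $\sigma_k$ ($0\le k\le n$) by $\prod_{i=1}^n(a-a_i)=\sum_{k=0}^n(-1)^k\sigma_k a^{n-k}$; for each $i$, $\sigma^i_m$ ($-1\le m\le n$) by $\prod_{l\neq i}(a-a_l)=\sum_{m=0}^{n-1}(-1)^m\sigma^i_m a^{n-1-m}$ together with $\sigma^i_{-1}=\sigma^i_n=0$; for $i\neq j$, $\sigma^{ij}_m$ ($-2\le m\le n$) by $\prod_{l\neq i,j}(a-a_l)=\sum_{m=0}^{n-2}(-1)^m\sigma^{ij}_m a^{n-2-m}$ together with $\sigma^{ij}_{-2}=\sigma^{ij}_{-1}=\sigma^{ij}_{n-1}=\sigma^{ij}_n=0$. *)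

theory Defs
  imports "HOL-Analysis.Analysis" "HOL-Computational_Algebra.Polynomial"
begin

text \<open>Phase-space functions on T*M, M = I x R, in canonical coordinates
  (a, y, P_a, P_y), written as curried functions of these four reals.\<close>

type_synonym phasefun = "real \<Rightarrow> real \<Rightarrow> real \<Rightarrow> real \<Rightarrow> real"

definition pd :: "nat \<Rightarrow> phasefun \<Rightarrow> phasefun" where
  "pd m f a y p q =
     (if m = 0 then deriv (\<lambda>t. f t y p q) a
      else if m = 1 then deriv (\<lambda>t. f a t p q) y
      else if m = 2 then deriv (\<lambda>t. f a y t q) p
      else deriv (\<lambda>t. f a y p t) q)"

definition poisson :: "phasefun \<Rightarrow> phasefun \<Rightarrow> phasefun" where
  "poisson f g a y p q =
     pd 0 f a y p q * pd 2 g a y p q - pd 2 f a y p q * pd 0 g a y p q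
   + pd 1 f a y p q * pd 3 g a y p q - pd 3 f a y p q * pd 1 g a y p q"

text \<open>The component of df /\ dg /\ dh along dz_i /\ dz_j /\ dz_k (3x3 minor).\<close>
definition wedge3_comp :: "phasefun \<Rightarrow> phasefun \<Rightarrow> phasefun \<Rightarrow> nat \<Rightarrow> nat \<Rightarrow> nat \<Rightarrow> phasefun" where
  "wedge3_comp f g h i j k a y p q =
     (let F = (\<lambda>m. pd m f a y p q); G = (\<lambda>m. pd m g a y p q); K = (\<lambda>m. pd m h a y p q)
      in F i * (G j * K k - G k * K j) - F j * (G i * K k - G k * K i)
         + F k * (G i * K j - G j * K i))"

definition wedge3_nonzero :: "phasefun \<Rightarrow> phasefun \<Rightarrow> phasefun \<Rightarrow> real \<Rightarrow> real \<Rightarrow> real \<Rightarrow> real \<Rightarrow> bool" where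
  "wedge3_nonzero f g h a y p q \<longleftrightarrow>
     (\<exists>i j k. i < j \<and> j < k \<and> k < 4 \<and> wedge3_comp f g h i j k a y p q \<noteq> 0)"

text \<open>Elementary symmetric functions of the numbers r l, l in S, indexed by
  an integer m, defined through the product expansion
  prod_{l in S} (X - r l) = sum_m (-1)^m e_m X^(card S - m), and 0 for m < 0 or m > card S.\<close>
definition esym :: "(nat \<Rightarrow> real) \<Rightarrow> nat set \<Rightarrow> int \<Rightarrow> real" where
  "esym r S m =
     (if 0 \<le> m \<and> nat m \<le> card S
      then (-1) ^ nat m * coeff (\<Prod>l\<in>S. [:- r l, 1:]) (card S - nat m)
      else 0)"

abbreviation sig1 :: "nat \<Rightarrow> (nat \<Rightarrow> real) \<Rightarrow> nat \<Rightarrow> int \<Rightarrow> real" where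
  "sig1 n r i m \<equiv> esym r ({1..n} - {i}) m"

abbreviation sig2 :: "nat \<Rightarrow> (nat \<Rightarrow> real) \<Rightarrow> nat \<Rightarrow> nat \<Rightarrow> int \<Rightarrow> real" where
  "sig2 n r i j m \<equiv> esym r ({1..n} - {i, j}) m"

definition Acoef :: "nat \<Rightarrow> (nat \<Rightarrow> real) \<Rightarrow> nat \<Rightarrow> real" where
  "Acoef n r k = coeff (\<Prod>i\<in>{1..n}. [:- r i, 1:]) k"

definition Delta :: "(nat \<Rightarrow> real) \<Rightarrow> (nat \<Rightarrow> real) \<Rightarrow> nat \<Rightarrow> real \<Rightarrow> real" where
  "Delta eps r i a = eps i * (a - r i)"

definition xfun :: "nat \<Rightarrow> (nat \<Rightarrow> real) \<Rightarrow> (nat \<Rightarrow> real) \<Rightarrow> (nat \<Rightarrow> real) \<Rightarrow> real \<Rightarrow> real" where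
  "xfun n eps r xi a = (\<Sum>i\<in>{1..n}. xi i / sqrt (Delta eps r i a))"

definition xdot :: "nat \<Rightarrow> (nat \<Rightarrow> real) \<Rightarrow> (nat \<Rightarrow> real) \<Rightarrow> (nat \<Rightarrow> real) \<Rightarrow> real \<Rightarrow> real" where
  "xdot n eps r xi a = deriv (xfun n eps r xi) a"

definition PiF :: "nat \<Rightarrow> (nat \<Rightarrow> real) \<Rightarrow> (nat \<Rightarrow> real) \<Rightarrow> (nat \<Rightarrow> real) \<Rightarrow> phasefun" where
  "PiF n eps r xi a y p q = a / xdot n eps r xi a * p"

definition Ham :: "nat \<Rightarrow> (nat \<Rightarrow> real) \<Rightarrow> (nat \<Rightarrow> real) \<Rightarrow> (nat \<Rightarrow> real) \<Rightarrow> phasefun" where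
  "Ham n eps r xi a y p q = (PiF n eps r xi a y p q)\<^sup>2 + a * q\<^sup>2"

definition PyF :: phasefun where
  "PyF a y p q = q"

definition btil :: "nat \<Rightarrow> (nat \<Rightarrow> real) \<Rightarrow> (nat \<Rightarrow> real) \<Rightarrow> (nat \<Rightarrow> real) \<Rightarrow> nat \<Rightarrow> real \<Rightarrow> real" where
  "btil n eps r xi k a =
     (-1) ^ k * (\<Sum>i\<in>{1..n}. xi i / sqrt (Delta eps r i a) * sig1 n r i (int k - 1))"

definition ctil :: "nat \<Rightarrow> (nat \<Rightarrow> real) \<Rightarrow> (nat \<Rightarrow> real) \<Rightarrow> (nat \<Rightarrow> real) \<Rightarrow> nat \<Rightarrow> real \<Rightarrow> real" where
  "ctil n eps r xi k a =
     (-1) ^ (k + 1) / 2 *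
       ((\<Sum>i\<in>{1..n}. (xi i)\<^sup>2 / Delta eps r i a * sig1 n r i (int k - 1))
      + (\<Sum>i\<in>{1..n}. \<Sum>j\<in>{1..n} - {i}.
           xi i * xi j / sqrt (Delta eps r i a * Delta eps r j a)
           * (sig2 n r i j (int k - 1) + a * sig2 n r i j (int k - 2))))"

definition Gfun :: "nat \<Rightarrow> (nat \<Rightarrow> real) \<Rightarrow> (nat \<Rightarrow> real) \<Rightarrow> (nat \<Rightarrow> real) \<Rightarrow> phasefun" where
  "Gfun n eps r xi a y p q =
     (\<Sum>k\<in>{0..n}. Acoef n r (n - k) * (Ham n eps r xi a y p q) ^ (n - k) * q ^ (2 * k))"

definition Q1fun :: "nat \<Rightarrow> (nat \<Rightarrow> real) \<Rightarrow> (nat \<Rightarrow> real) \<Rightarrow> (nat \<Rightarrow> real) \<Rightarrow> phasefun" where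
  "Q1fun n eps r xi a y p q =
     (\<Sum>k\<in>{1..n}. btil n eps r xi k a * (Ham n eps r xi a y p q) ^ (n - k)
        * PiF n eps r xi a y p q * q ^ (2 * k - 1))"

definition Q2fun :: "nat \<Rightarrow> (nat \<Rightarrow> real) \<Rightarrow> (nat \<Rightarrow> real) \<Rightarrow> (nat \<Rightarrow> real) \<Rightarrow> phasefun" where
  "Q2fun n eps r xi a y p q =
     (\<Sum>k\<in>{1..n}. ctil n eps r xi k a * (Ham n eps r xi a y p q) ^ (n - k) * q ^ (2 * k))"

definition S1fun :: "nat \<Rightarrow> (nat \<Rightarrow> real) \<Rightarrow> (nat \<Rightarrow> real) \<Rightarrow> (nat \<Rightarrow> real) \<Rightarrow> phasefun" where
  "S1fun n eps r xi a y p q = Q1fun n eps r xi a y p q + y * Gfun n eps r xi a y p q"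

definition S2fun :: "nat \<Rightarrow> (nat \<Rightarrow> real) \<Rightarrow> (nat \<Rightarrow> real) \<Rightarrow> (nat \<Rightarrow> real) \<Rightarrow> phasefun" where
  "S2fun n eps r xi a y p q =
     Q2fun n eps r xi a y p q + y * Q1fun n eps r xi a y p q + y\<^sup>2 / 2 * Gfun n eps r xi a y p q"

end

theory Submission
  imports Defs
begin

text \<open>
  Write \<open>U = a / x'\<close>, so that \<open>\<Pi> = U(a) P\<^sub>a\<close>. As \<open>H\<close> involves \<open>P\<^sub>a\<close> only through \<open>\<Pi>\<close> and does not
  involve \<open>y\<close>, one has \<open>{H, P\<^sub>y} = 0\<close>, \<open>{H, \<Pi>} = U P\<^sub>y\<^sup>2\<close>, \<open>{H, \<phi>(a)} = -2 U \<Pi> \<phi>'\<close> and \<open>{H, y} = -2 a P\<^sub>y\<close>.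
  Applied termwise this gives \<open>{H, G} = 0\<close>, as \<open>G\<close> has constant coefficients;
  \<open>{H, Q\<^sub>1} = 2 a P\<^sub>y G\<close>, because the recurrence \<open>b\<^sub>k + 2 a b\<^sub>k' - 2 b\<^sub>k\<^sub>+\<^sub>1' = 2 x' A\<^sub>n\<^sub>-\<^sub>k\<close> makes the
  sum telescope; and \<open>{H, Q\<^sub>2} = 2 a P\<^sub>y Q\<^sub>1\<close>, because \<open>c\<^sub>k' = - x' b\<^sub>k\<close>. These are exactly the relations
  under which the \<open>y\<close>-dependent terms of \<open>S\<^sub>1\<close> and \<open>S\<^sub>2\<close> cancel. Both coefficient identities follow
  from \<open>(\<xi>\<^sub>i / \<surd>\<Delta>\<^sub>i)' = - \<xi>\<^sub>i / (2 \<surd>\<Delta>\<^sub>i (a - a\<^sub>i))\<close> and \<open>\<sigma>\<^sub>m = \<sigma>\<^sup>i\<^sub>m + a\<^sub>i \<sigma>\<^sup>i\<^sub>m\<^sub>-\<^sub>1\<close>.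

  For independence: at \<open>P\<^sub>y = 0\<close> the \<open>dy \<and> dP\<^sub>a \<and> dP\<^sub>y\<close>-component of \<open>dH \<and> dP\<^sub>y \<and> dS\<^sub>1\<close> is
  \<open>\<partial>\<^sub>P\<^sub>aH \<cdot> G = 2 U\<^sup>2 P\<^sub>a \<cdot> \<Pi>\<^sup>2\<^sup>n\<close>, nonzero for \<open>P\<^sub>a \<noteq> 0\<close>; for \<open>S\<^sub>2\<close> the factor \<open>G\<close> becomes \<open>y G\<close>.
\<close>

section \<open>Elementary symmetric functions\<close>

lemma coeff_linear_factor_mult:
  "coeff ([:- c, 1:] * P) k = - c * coeff P k + (if k = 0 then 0 else coeff P (k - 1))"
  for P :: "'a::comm_ring_1 poly"
  by (simp add: coeff_pCons')

lemma coeff_prod_linear_factors_eq_0: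
  fixes r :: "'b \<Rightarrow> 'a::comm_ring_1"
  assumes "finite S" "card S < k"
  shows "coeff (\<Prod>l\<in>S. [:- r l, 1:]) k = 0"
proof -
  have "degree (\<Prod>l\<in>S. [:- r l, 1:]) \<le> card S"
    by (rule order_trans[OF degree_prod_sum_le[OF assms(1)]]) simp
  with assms(2) show ?thesis by (intro coeff_eq_0) simp
qed

lemma coeff_prod_linear_factors_card:
  fixes r :: "'b \<Rightarrow> 'a::comm_ring_1"
  assumes "finite S"
  shows "coeff (\<Prod>l\<in>S. [:- r l, 1:]) (card S) = 1"
  using assms
proof (induction S rule: finite_induct)
  case (insert x F)
  then show ?case
    using coeff_prod_linear_factors_eq_0[of F "Suc (card F)" r]
    by (simp add: coeff_linear_factor_mult)
qed simp

text \<open>The recursion \<open>\<sigma>\<^sub>m(S) = \<sigma>\<^sub>m(S - {i}) + r\<^sub>i \<sigma>\<^sub>m\<^sub>-\<^sub>1(S - {i})\<close>, valid for every integer \<open>m\<close>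
  thanks to the convention \<open>\<sigma>\<^sub>m = 0\<close> outside \<open>0..card S\<close>.\<close>
lemma esym_remove:
  assumes "finite S" "i \<in> S"
  shows "esym r S m = esym r (S - {i}) m + r i * esym r (S - {i}) (m - 1)"
proof (cases "m < 0")
  case True
  then show ?thesis by (simp add: esym_def)
next
  case False
  define N where "N = card (S - {i})"
  define P where "P = (\<Prod>l\<in>S - {i}. [:- r l, 1:])"
  have card_S: "card S = Suc N"
    using card_Suc_Diff1[OF assms] by (simp add: N_def)
  have prod_S: "(\<Prod>l\<in>S. [:- r l, 1:]) = [:- r i, 1:] * P"
    using assms by (simp add: P_def prod.remove)
  have P_high: "coeff P k = 0" if "N < k" for k
    using coeff_prod_linear_factors_eq_0[of "S - {i}" k r] assms that by (simp add: P_def N_def)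
  obtain k where m: "m = int k"
    using False by (metis nonneg_int_cases not_less)
  consider "k = 0" | j where "k = Suc j" "k \<le> N" | "k = Suc N" | "Suc N < k"
    by (metis not0_implies_Suc not_less_eq_eq le_neq_implies_less)
  then show ?thesis
  proof cases
    case 1
    then show ?thesis
      using P_high[of "Suc N"] by (simp add: esym_def m card_S prod_S coeff_linear_factor_mult
          flip: N_def P_def)
  next
    case 2
    then have "nat (1 + int j) = Suc j" "Suc (N - Suc j) = N - j" by simp_all
    with 2 show ?thesis
      by (simp add: esym_def m card_S prod_S coeff_linear_factor_mult coeff_pCons' algebra_simps
          flip: N_def P_def)
  next
    case 3
    then show ?thesis
      by (simp add: esym_def m card_S prod_S coeff_linear_factor_mult nat_add_distrib
          flip: N_def P_def)
  next
    case 4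
    then show ?thesis by (simp add: esym_def m card_S flip: N_def)
  qed
qed

lemma esym_remove_pair:
  assumes "finite S" "i \<in> S" "j \<in> S" "i \<noteq> j"
  shows "esym r (S - {i}) m = esym r (S - {i, j}) m + r j * esym r (S - {i, j}) (m - 1)"
  using esym_remove[of "S - {i}" j r m] assms by (simp add: insert_commute Diff_insert2[symmetric])

lemma Acoef_eq_esym:
  assumes "j \<le> n"
  shows "Acoef n r (n - j) = (-1) ^ j * esym r {1..n} (int j)"
  using assms by (simp add: Acoef_def esym_def)

lemma Acoef_top: "Acoef n r n = 1"
  using coeff_prod_linear_factors_card[of "{1..n}" r] by (simp add: Acoef_def)

section \<open>The summands of \<open>x\<close>\<close>

definition xterm :: "(nat \<Rightarrow> real) \<Rightarrow> (nat \<Rightarrow> real) \<Rightarrow> (nat \<Rightarrow> real) \<Rightarrow> nat \<Rightarrow> real \<Rightarrow> real" where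
  "xterm eps r xi i a = xi i / sqrt (Delta eps r i a)"

definition dxterm :: "(nat \<Rightarrow> real) \<Rightarrow> (nat \<Rightarrow> real) \<Rightarrow> (nat \<Rightarrow> real) \<Rightarrow> nat \<Rightarrow> real \<Rightarrow> real" where
  "dxterm eps r xi i a = - xterm eps r xi i a / (2 * (a - r i))"

lemma has_real_derivative_Delta: "(Delta eps r i has_real_derivative eps i) (at a)"
  unfolding Delta_def[abs_def] by (auto intro!: derivative_eq_intros)

lemma Delta_pos_imp_neq: "Delta eps r i a > 0 \<Longrightarrow> a \<noteq> r i"
  by (auto simp: Delta_def)

lemma eps_div_Delta: "Delta eps r i a > 0 \<Longrightarrow> eps i / Delta eps r i a = 1 / (a - r i)"
  by (auto simp: Delta_def)

lemma dxterm_eq_xterm: "Delta eps r i a > 0 \<Longrightarrow> 2 * (a - r i) * dxterm eps r xi i a = - xterm eps r xi i a"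
  by (auto simp: dxterm_def dest: Delta_pos_imp_neq)

lemma has_real_derivative_xterm:
  assumes "Delta eps r i a > 0"
  shows "(xterm eps r xi i has_real_derivative dxterm eps r xi i a) (at a)"
proof -
  have "((\<lambda>s. sqrt (Delta eps r i s)) has_real_derivative
          inverse (sqrt (Delta eps r i a)) / 2 * eps i) (at a)"
    by (rule DERIV_chain2[OF DERIV_real_sqrt[OF assms] has_real_derivative_Delta])
  from DERIV_divide[OF DERIV_const this, of "xi i"]
  have "(xterm eps r xi i has_real_derivative
          - xterm eps r xi i a / 2 * (eps i / Delta eps r i a)) (at a)"
    using assms by (simp add: xterm_def[abs_def] power2_eq_square field_simps)
  then show ?thesis
    using eps_div_Delta[OF assms] by (simp add: dxterm_def field_simps)
qed

lemma xterm_differentiable: "Delta eps r i a > 0 \<Longrightarrow> xterm eps r xi i differentiable (at a)"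
  using has_real_derivative_xterm[of eps r i a xi] by (auto simp: real_differentiable_def)

lemma has_real_derivative_inverse_Delta:
  assumes "Delta eps r i a > 0"
  shows "((\<lambda>s. c / Delta eps r i s) has_real_derivative - (c / Delta eps r i a) / (a - r i)) (at a)"
proof -
  have "((\<lambda>s. c / Delta eps r i s) has_real_derivative
          - (c / Delta eps r i a) * (eps i / Delta eps r i a)) (at a)"
    using DERIV_divide[OF DERIV_const[of c] has_real_derivative_Delta[of eps r i a]] assms
    by (simp add: power2_eq_square field_simps)
  then show ?thesis
    using eps_div_Delta[OF assms] by (simp add: field_simps)
qed

lemma has_real_derivative_xi_sq_div_Delta:
  assumes "Delta eps r i a > 0"
  shows "((\<lambda>s. (xi i)\<^sup>2 / Delta eps r i s) has_real_derivative
           2 * xterm eps r xi i a * dxterm eps r xi i a) (at a)"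
proof -
  have "(xi i)\<^sup>2 / Delta eps r i a = (xterm eps r xi i a)\<^sup>2"
    using assms by (simp add: xterm_def power_divide less_imp_le)
  then have "- ((xi i)\<^sup>2 / Delta eps r i a) / (a - r i) = 2 * xterm eps r xi i a * dxterm eps r xi i a"
    using Delta_pos_imp_neq[OF assms] by (simp add: dxterm_def field_simps power2_eq_square)
  then show ?thesis
    using has_real_derivative_inverse_Delta[OF assms, of "(xi i)\<^sup>2"] by simp
qed

lemma xdot_eq_sum:
  assumes "\<forall>i\<in>{1..n}. Delta eps r i a > 0"
  shows "xdot n eps r xi a = (\<Sum>i\<in>{1..n}. dxterm eps r xi i a)"
proof -
  have "((\<lambda>s. \<Sum>i\<in>{1..n}. xterm eps r xi i s) has_real_derivative (\<Sum>i\<in>{1..n}. dxterm eps r xi i a)) (at a)"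
    using assms by (intro DERIV_sum has_real_derivative_xterm) auto
  then show ?thesis
    unfolding xdot_def by (intro DERIV_imp_deriv) (simp add: xfun_def[abs_def] xterm_def)
qed

lemma xdot_differentiable:
  assumes "open I" "a \<in> I" "\<forall>s\<in>I. \<forall>i\<in>{1..n}. Delta eps r i s > 0"
  shows "xdot n eps r xi differentiable (at a)"
proof -
  have "\<forall>i\<in>{1..n}. Delta eps r i a > 0"
    using assms by blast
  then have "(\<lambda>s. \<Sum>i\<in>{1..n}. dxterm eps r xi i s) differentiable (at a)"
    unfolding dxterm_def
    by (intro differentiable_sum ballI differentiable_minus differentiable_divide xterm_differentiable)
      (auto dest: Delta_pos_imp_neq)
  then obtain D where "((\<lambda>s. \<Sum>i\<in>{1..n}. dxterm eps r xi i s) has_real_derivative D) (at a)"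
    by (auto simp: real_differentiable_def)
  then have "(xdot n eps r xi has_real_derivative D) (at a)"
    by (rule has_field_derivative_transform_within_open[OF _ assms(1,2)])
      (use assms(3) xdot_eq_sum in auto)
  then show ?thesis
    by (auto simp: real_differentiable_def)
qed

section \<open>The coefficients \<open>b\<^sub>k\<close> and \<open>c\<^sub>k\<close>\<close>

lemma btil_eq_xterm:
  "btil n eps r xi k = (\<lambda>a. (-1) ^ k * (\<Sum>i\<in>{1..n}. xterm eps r xi i a * sig1 n r i (int k - 1)))"
  by (simp add: btil_def xterm_def fun_eq_iff)

lemma has_real_derivative_btil:
  assumes "\<forall>i\<in>{1..n}. Delta eps r i a > 0"
  shows "(btil n eps r xi k has_real_derivative
      (-1) ^ k * (\<Sum>i\<in>{1..n}. dxterm eps r xi i a * sig1 n r i (int k - 1))) (at a)"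
  unfolding btil_eq_xterm using assms
  by (intro DERIV_cmult DERIV_sum DERIV_cmult_right has_real_derivative_xterm) auto

lemma btil_0: "btil n eps r xi 0 = (\<lambda>_. 0)"
  by (simp add: btil_def esym_def fun_eq_iff)

lemma btil_Suc_top: "btil n eps r xi (Suc n) = (\<lambda>_. 0)"
  by (cases n) (simp_all add: btil_def esym_def fun_eq_iff)

lemma btil_recurrence:
  assumes pos: "\<forall>i\<in>{1..n}. Delta eps r i a > 0" and "j \<le> n"
  shows "btil n eps r xi j a + 2 * a * deriv (btil n eps r xi j) a
           - 2 * deriv (btil n eps r xi (Suc j)) a
         = 2 * xdot n eps r xi a * Acoef n r (n - j)"
proof -
  define v where "v i = xterm eps r xi i a" for i
  define v' where "v' i = dxterm eps r xi i a" for i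
  define s where "s i = sig1 n r i (int j - 1)" for i
  define s' where "s' i = sig1 n r i (int j)" for i
  have deriv_btil: "deriv (btil n eps r xi k) a = (-1) ^ k * (\<Sum>i\<in>{1..n}. v' i * sig1 n r i (int k - 1))"
    for k
    unfolding v'_def by (rule DERIV_imp_deriv[OF has_real_derivative_btil[OF pos]])
  have "btil n eps r xi j a + 2 * a * deriv (btil n eps r xi j) a
          - 2 * deriv (btil n eps r xi (Suc j)) a
      = (\<Sum>i\<in>{1..n}. (-1) ^ j * (v i * s i) + 2 * a * ((-1) ^ j * (v' i * s i))
          - 2 * ((-1) ^ Suc j * (v' i * s' i)))"
    unfolding deriv_btil
    by (simp add: btil_eq_xterm v_def s_def s'_def sum.distrib sum_subtractf sum_distrib_left sum_negf)
  also have "\<dots> = (\<Sum>i\<in>{1..n}. 2 * v' i * ((-1) ^ j * (s' i + r i * s i)))"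
  proof (rule sum.cong[OF refl])
    fix i assume "i \<in> {1..n}"
    then have v: "v i = - (2 * (a - r i) * v' i)"
      using pos dxterm_eq_xterm[of eps r i a xi] by (simp add: v_def v'_def)
    show "(-1) ^ j * (v i * s i) + 2 * a * ((-1) ^ j * (v' i * s i))
          - 2 * ((-1) ^ Suc j * (v' i * s' i))
        = 2 * v' i * ((-1) ^ j * (s' i + r i * s i))"
      unfolding v by (simp add: algebra_simps)
  qed
  also have "\<dots> = 2 * xdot n eps r xi a * Acoef n r (n - j)"
  proof -
    have "Acoef n r (n - j) = (-1) ^ j * (s' i + r i * s i)" if "i \<in> {1..n}" for i
      using Acoef_eq_esym[OF \<open>j \<le> n\<close>] esym_remove[of "{1..n}" i r "int j"] that
      by (simp add: s_def s'_def)
    then show ?thesis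
      by (simp add: xdot_eq_sum[OF pos] v'_def sum_distrib_left sum_distrib_right)
  qed
  finally show ?thesis .
qed

lemma sum_diagonal_plus_symmetrized_offdiagonal:
  fixes F :: "'a \<Rightarrow> 'a \<Rightarrow> 'b::comm_ring_1"
  assumes "finite S"
  shows "(\<Sum>i\<in>S. 2 * F i i) + (\<Sum>i\<in>S. \<Sum>j\<in>S - {i}. F i j + F j i) = 2 * (\<Sum>i\<in>S. \<Sum>j\<in>S. F i j)"
proof -
  have "(\<Sum>i\<in>S. \<Sum>j\<in>{j \<in> S. i \<noteq> j}. F j i) = (\<Sum>j\<in>S. \<Sum>i\<in>{i \<in> S. i \<noteq> j}. F j i)"
    by (rule sum.swap_restrict[OF assms assms])
  then have swap: "(\<Sum>i\<in>S. \<Sum>j\<in>S - {i}. F j i) = (\<Sum>i\<in>S. \<Sum>j\<in>S - {i}. F i j)"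
    by (simp add: set_diff_eq conj_commute eq_commute[of _ i for i])
  have "(\<Sum>i\<in>S. \<Sum>j\<in>S. F i j) = (\<Sum>i\<in>S. F i i + (\<Sum>j\<in>S - {i}. F i j))"
    using assms by (intro sum.cong refl) (simp add: sum.remove)
  then show ?thesis
    by (simp add: sum.distrib swap sum_distrib_left algebra_simps)
qed

text \<open>The \<open>\<beta>\<close>-terms cancel: \<open>\<alpha> + a \<beta>\<close> equals both \<open>\<sigma>\<^sub>f + (a - w) \<beta>\<close> and \<open>\<sigma>\<^sub>g + (a - u) \<beta>\<close>.\<close>
lemma has_real_derivative_pair_product:
  assumes f: "(f has_real_derivative f') (at a)" and g: "(g has_real_derivative g') (at a)"
    and "2 * (a - u) * f' = - f a" "2 * (a - w) * g' = - g a"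
    and "\<alpha> + w * \<beta> = \<sigma>\<^sub>f" "\<alpha> + u * \<beta> = \<sigma>\<^sub>g"
  shows "((\<lambda>s. f s * g s * (\<alpha> + s * \<beta>)) has_real_derivative f a * g' * \<sigma>\<^sub>f + f' * g a * \<sigma>\<^sub>g) (at a)"
proof -
  have "((\<lambda>s. f s * g s * (\<alpha> + s * \<beta>)) has_real_derivative
          (f' * g a + f a * g') * (\<alpha> + a * \<beta>) + f a * g a * \<beta>) (at a)"
    by (auto intro!: derivative_eq_intros f g)
  moreover have "(f' * g a + f a * g') * (\<alpha> + a * \<beta>) + f a * g a * \<beta>
      = f a * g' * \<sigma>\<^sub>f + f' * g a * \<sigma>\<^sub>g
        + \<beta> * (g a * (2 * (a - u) * f') + f a * (2 * (a - w) * g') + 2 * f a * g a) / 2"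
    by (simp add: field_simps flip: assms(5,6))
  ultimately show ?thesis
    using assms(3,4) by simp
qed

lemma has_real_derivative_xterm_pair:
  assumes "finite S" "i \<in> S" "j \<in> S" "i \<noteq> j"
    and "Delta eps r i a > 0" "Delta eps r j a > 0"
  shows "((\<lambda>s. xterm eps r xi i s * xterm eps r xi j s
             * (esym r (S - {i, j}) m + s * esym r (S - {i, j}) (m - 1))) has_real_derivative
           xterm eps r xi i a * dxterm eps r xi j a * esym r (S - {i}) m
           + dxterm eps r xi i a * xterm eps r xi j a * esym r (S - {j}) m) (at a)"
proof (rule has_real_derivative_pair_product)
  show "esym r (S - {i, j}) m + r j * esym r (S - {i, j}) (m - 1) = esym r (S - {i}) m"
    "esym r (S - {i, j}) m + r i * esym r (S - {i, j}) (m - 1) = esym r (S - {j}) m"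
    using esym_remove_pair[of S i j r m] esym_remove_pair[of S j i r m] assms(1-4)
    by (simp_all add: insert_commute)
qed (use assms(5,6) has_real_derivative_xterm dxterm_eq_xterm in auto)

lemma has_real_derivative_ctil:
  assumes pos: "\<forall>i\<in>{1..n}. Delta eps r i a > 0"
  shows "(ctil n eps r xi k has_real_derivative - xdot n eps r xi a * btil n eps r xi k a) (at a)"
proof -
  define s where "s i = sig1 n r i (int k - 1)" for i
  define F where "F i j = xterm eps r xi i a * dxterm eps r xi j a * s i" for i j
  have diagonal: "((\<lambda>b. (xi i)\<^sup>2 / Delta eps r i b * s i) has_real_derivative 2 * F i i) (at a)"
    if "i \<in> {1..n}" for i
    using DERIV_cmult_right[OF has_real_derivative_xi_sq_div_Delta, of eps r i a xi "s i"] that pos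
    by (simp add: F_def mult.assoc)
  have offdiagonal: "((\<lambda>b. xterm eps r xi i b * xterm eps r xi j b
        * (sig2 n r i j (int k - 1) + b * sig2 n r i j (int k - 2))) has_real_derivative F i j + F j i) (at a)"
    if "i \<in> {1..n}" "j \<in> {1..n} - {i}" for i j
    using has_real_derivative_xterm_pair[of "{1..n}" i j eps r a xi "int k - 1"] that pos
    by (simp add: F_def s_def mult_ac)
  have "ctil n eps r xi k = (\<lambda>b. (-1) ^ (k + 1) / 2 *
      ((\<Sum>i\<in>{1..n}. (xi i)\<^sup>2 / Delta eps r i b * s i)
     + (\<Sum>i\<in>{1..n}. \<Sum>j\<in>{1..n} - {i}. xterm eps r xi i b * xterm eps r xi j b
          * (sig2 n r i j (int k - 1) + b * sig2 n r i j (int k - 2)))))"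
    by (simp add: ctil_def xterm_def real_sqrt_mult s_def fun_eq_iff)
  then have "(ctil n eps r xi k has_real_derivative (-1) ^ (k + 1) / 2 *
      ((\<Sum>i\<in>{1..n}. 2 * F i i) + (\<Sum>i\<in>{1..n}. \<Sum>j\<in>{1..n} - {i}. F i j + F j i))) (at a)"
    by (simp only:) (intro DERIV_cmult DERIV_add DERIV_sum diagonal offdiagonal)
  moreover have "(-1) ^ (k + 1) / 2 *
      ((\<Sum>i\<in>{1..n}. 2 * F i i) + (\<Sum>i\<in>{1..n}. \<Sum>j\<in>{1..n} - {i}. F i j + F j i))
      = (-1) ^ (k + 1) * ((\<Sum>i\<in>{1..n}. xterm eps r xi i a * s i) * (\<Sum>j\<in>{1..n}. dxterm eps r xi j a))"
    unfolding sum_diagonal_plus_symmetrized_offdiagonal[OF finite_atLeastAtMost] sum_product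
    by (simp add: F_def mult_ac)
  ultimately show ?thesis
    by (simp add: xdot_eq_sum[OF pos] btil_eq_xterm s_def mult_ac)
qed

section \<open>Brackets with Hamiltonians of the form \<open>(U(a) P\<^sub>a)\<^sup>2 + a P\<^sub>y\<^sup>2\<close>\<close>

definition Ham_of :: "(real \<Rightarrow> real) \<Rightarrow> phasefun" where
  "Ham_of U a y p q = (U a * p)\<^sup>2 + a * q\<^sup>2"

lemma Ham_eq_Ham_of: "Ham n eps r xi = Ham_of (\<lambda>a. a / xdot n eps r xi a)"
  by (simp add: Ham_def PiF_def Ham_of_def fun_eq_iff)

lemma pd_Ham_of_0:
  assumes "(U has_real_derivative U') (at a)"
  shows "pd 0 (Ham_of U) a y p q = 2 * (U a * p) * (U' * p) + q\<^sup>2"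
  unfolding pd_def Ham_of_def
  by (auto intro!: DERIV_imp_deriv derivative_eq_intros assms simp: power2_eq_square)

lemma pd_Ham_of:
  shows "pd 1 (Ham_of U) a y p q = 0"
    and "pd 2 (Ham_of U) a y p q = 2 * (U a * p) * U a"
    and "pd 3 (Ham_of U) a y p q = 2 * a * q"
  unfolding pd_def Ham_of_def
  by (auto intro!: DERIV_imp_deriv derivative_eq_intros simp: power2_eq_square)

text \<open>\<open>v\<close> is the \<open>(a, P\<^sub>a)\<close>-part \<open>\<partial>\<^sub>af \<partial>\<^sub>P\<^sub>ag - \<partial>\<^sub>P\<^sub>af \<partial>\<^sub>ag\<close> of \<open>{f, g}\<close>. Unlike \<open>poisson\<close>, which is
  built from \<open>deriv\<close>, it asserts that the partial derivatives of \<open>g\<close> exist, and is therefore additive.\<close>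
definition has_planar_bracket :: "phasefun \<Rightarrow> phasefun \<Rightarrow> real \<Rightarrow> real \<Rightarrow> real \<Rightarrow> real \<Rightarrow> real \<Rightarrow> bool" where
  "has_planar_bracket f g a y p q v \<longleftrightarrow>
     (\<exists>ga gp. ((\<lambda>s. g s y p q) has_real_derivative ga) (at a)
       \<and> ((\<lambda>t. g a y t q) has_real_derivative gp) (at p)
       \<and> v = pd 0 f a y p q * gp - pd 2 f a y p q * ga)"

lemma has_planar_bracket_add:
  assumes "has_planar_bracket f g a y p q v" "has_planar_bracket f h a y p q w"
  shows "has_planar_bracket f (\<lambda>a y p q. g a y p q + h a y p q) a y p q (v + w)"
  using assms unfolding has_planar_bracket_def by (fastforce intro: DERIV_add simp: algebra_simps)

lemma has_planar_bracket_cmult: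
  assumes "has_planar_bracket f g a y p q v"
  shows "has_planar_bracket f (\<lambda>a y p q. c y q * g a y p q) a y p q (c y q * v)"
  using assms unfolding has_planar_bracket_def by (fastforce intro: DERIV_cmult simp: algebra_simps)

lemma has_planar_bracket_sum:
  assumes "finite K" "\<And>k. k \<in> K \<Longrightarrow> has_planar_bracket f (g k) a y p q (v k)"
  shows "has_planar_bracket f (\<lambda>a y p q. \<Sum>k\<in>K. g k a y p q) a y p q (\<Sum>k\<in>K. v k)"
  using assms
proof (induction K rule: finite_induct)
  case empty
  show ?case
    by (auto simp: has_planar_bracket_def intro!: exI[of _ 0])
next
  case (insert k K)
  then show ?case
    using has_planar_bracket_add[of f "g k" a y p q "v k"] by simp
qed

lemma poisson_eq_planar_bracket:
  assumes "has_planar_bracket f g a y p q v"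
    and "\<And>z. f a z p q = f a y p q"
    and "((\<lambda>z. g a z p q) has_real_derivative gy) (at y)"
  shows "poisson f g a y p q = v - pd 3 f a y p q * gy"
proof -
  obtain ga gp where "((\<lambda>s. g s y p q) has_real_derivative ga) (at a)"
    "((\<lambda>t. g a y t q) has_real_derivative gp) (at p)" "v = pd 0 f a y p q * gp - pd 2 f a y p q * ga"
    using assms(1) by (auto simp: has_planar_bracket_def)
  moreover have "(\<lambda>t. f a t p q) = (\<lambda>_. f a y p q)"
    using assms(2) by (rule ext)
  then have "pd 1 f a y p q = 0"
    by (simp add: pd_def DERIV_imp_deriv)
  ultimately show ?thesis
    using assms(3) by (simp add: poisson_def pd_def DERIV_imp_deriv)
qed

lemma has_planar_bracket_Ham_of_power:
  assumes U: "(U has_real_derivative U') (at a)" and \<phi>: "(\<phi> has_real_derivative \<phi>') (at a)"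
  shows "has_planar_bracket (Ham_of U) (\<lambda>s y t q. \<phi> s * Ham_of U s y t q ^ m * c q) a y p q
           (- 2 * U a * (U a * p) * \<phi>' * Ham_of U a y p q ^ m * c q)"
proof -
  define H where "H = Ham_of U a y p q"
  define Ha where "Ha = 2 * (U a * p) * (U' * p) + q\<^sup>2"
  define Hp where "Hp = 2 * (U a * p) * U a"
  have "((\<lambda>s. \<phi> s * Ham_of U s y p q ^ m * c q) has_real_derivative
          (\<phi>' * H ^ m + \<phi> a * (of_nat m * H ^ (m - 1) * Ha)) * c q) (at a)"
    unfolding Ham_of_def H_def Ha_def by (rule derivative_eq_intros U \<phi> refl | simp)+
  moreover have "((\<lambda>t. \<phi> a * Ham_of U a y t q ^ m * c q) has_real_derivative
          \<phi> a * (of_nat m * H ^ (m - 1) * Hp) * c q) (at p)"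
    unfolding Ham_of_def H_def Hp_def by (rule derivative_eq_intros refl | simp)+
  ultimately show ?thesis
    unfolding has_planar_bracket_def pd_Ham_of_0[OF U] pd_Ham_of Ha_def[symmetric] Hp_def[symmetric]
    by (intro exI conjI) (auto simp: Hp_def H_def algebra_simps)
qed

lemma has_planar_bracket_Ham_of_Pi_power:
  assumes U: "(U has_real_derivative U') (at a)" and \<phi>: "(\<phi> has_real_derivative \<phi>') (at a)"
  shows "has_planar_bracket (Ham_of U) (\<lambda>s y t q. \<phi> s * Ham_of U s y t q ^ m * (U s * t) * c q) a y p q
           (Ham_of U a y p q ^ m * U a * (\<phi> a * q\<^sup>2 - 2 * (U a * p)\<^sup>2 * \<phi>') * c q)"
proof -
  define H where "H = Ham_of U a y p q"
  define Ha where "Ha = 2 * (U a * p) * (U' * p) + q\<^sup>2"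
  define Hp where "Hp = 2 * (U a * p) * U a"
  have "((\<lambda>s. \<phi> s * Ham_of U s y p q ^ m * (U s * p) * c q) has_real_derivative
          (\<phi>' * H ^ m * (U a * p) + \<phi> a * (of_nat m * H ^ (m - 1) * Ha) * (U a * p)
           + \<phi> a * H ^ m * (U' * p)) * c q) (at a)"
    unfolding Ham_of_def H_def Ha_def
    by (rule derivative_eq_intros U \<phi> refl | simp)+ (simp add: algebra_simps power2_eq_square)
  moreover have "((\<lambda>t. \<phi> a * Ham_of U a y t q ^ m * (U a * t) * c q) has_real_derivative
          (\<phi> a * (of_nat m * H ^ (m - 1) * Hp) * (U a * p) + \<phi> a * H ^ m * U a) * c q) (at p)"
    unfolding Ham_of_def H_def Hp_def by (rule derivative_eq_intros refl | simp)+
  ultimately show ?thesis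
    unfolding has_planar_bracket_def pd_Ham_of_0[OF U] pd_Ham_of Ha_def[symmetric] Hp_def[symmetric]
    by (intro exI conjI) (auto simp: Ha_def Hp_def H_def algebra_simps power2_eq_square)
qed

section \<open>The brackets of \<open>H\<close> with \<open>P\<^sub>y\<close>, \<open>S\<^sub>1\<close> and \<open>S\<^sub>2\<close>\<close>

text \<open>With \<open>T\<^sub>k = q\<^sup>2\<^sup>k\<^sup>+\<^sup>1 H\<^sup>n\<^sup>-\<^sup>k\<close> both sides equal \<open>\<Sum> T\<^sub>k (b\<^sub>k + 2 t b\<^sub>k') - 2 \<Sum> T\<^sub>k\<^sub>-\<^sub>1 b\<^sub>k'\<close>.\<close>
lemma sum_recurrence_telescope:
  fixes b b' A :: "nat \<Rightarrow> real"
  assumes "b 0 = 0" "b' 0 = 0" "b' (Suc n) = 0"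
    and recurrence: "\<And>j. j \<le> n \<Longrightarrow> b j + 2 * t * b' j - 2 * b' (Suc j) = 2 * X * A (n - j)"
  shows "(\<Sum>k=1..n. q ^ (2 * k - 1) * H ^ (n - k) * (b k * q\<^sup>2 - 2 * (H - t * q\<^sup>2) * b' k))
       = 2 * X * q * (\<Sum>k=0..n. A (n - k) * H ^ (n - k) * q ^ (2 * k))"
proof -
  define T where "T k = q ^ (2 * k + 1) * H ^ (n - k)" for k
  have "2 * X * q * (\<Sum>k=0..n. A (n - k) * H ^ (n - k) * q ^ (2 * k))
      = (\<Sum>k=0..n. T k * (b k + 2 * t * b' k - 2 * b' (Suc k)))"
    using recurrence by (simp add: sum_distrib_left T_def mult_ac)
  also have "\<dots> = (\<Sum>k=0..n. T k * (b k + 2 * t * b' k)) - 2 * (\<Sum>k=0..n. T k * b' (Suc k))"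
    by (simp add: sum_subtractf sum_distrib_left algebra_simps)
  also have "(\<Sum>k=0..n. T k * (b k + 2 * t * b' k)) = (\<Sum>k=1..n. T k * (b k + 2 * t * b' k))"
    using assms(1,2) by (simp add: sum.atLeast_Suc_atMost)
  also have "(\<Sum>k=0..n. T k * b' (Suc k)) = (\<Sum>k=1..n. T (k - 1) * b' k)"
  proof -
    have "(\<Sum>k=0..n. T k * b' (Suc k)) = (\<Sum>k=Suc 0..Suc n. T (k - 1) * b' k)"
      by (simp only: sum.shift_bounds_cl_Suc_ivl diff_Suc_1)
    then show ?thesis
      using assms(3) by simp
  qed
  also have "(\<Sum>k=1..n. T k * (b k + 2 * t * b' k)) - 2 * (\<Sum>k=1..n. T (k - 1) * b' k)
      = (\<Sum>k=1..n. q ^ (2 * k - 1) * H ^ (n - k) * (b k * q\<^sup>2 - 2 * (H - t * q\<^sup>2) * b' k))"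
    unfolding sum_distrib_left sum_subtractf[symmetric]
  proof (rule sum.cong[OF refl])
    fix k assume "k \<in> {1..n}"
    then have "2 * k + 1 = (2 * k - 1) + 2" "2 * (k - 1) + 1 = 2 * k - 1" "n - (k - 1) = Suc (n - k)"
      by auto
    then have "T k = q ^ (2 * k - 1) * q\<^sup>2 * H ^ (n - k)" "T (k - 1) = q ^ (2 * k - 1) * H ^ (n - k) * H"
      unfolding T_def by (metis power_add, simp)
    then show "T k * (b k + 2 * t * b' k) - 2 * (T (k - 1) * b' k)
        = q ^ (2 * k - 1) * H ^ (n - k) * (b k * q\<^sup>2 - 2 * (H - t * q\<^sup>2) * b' k)"
      by (simp add: algebra_simps)
  qed
  finally show ?thesis ..
qed

lemma has_planar_bracket_Gfun:
  assumes "((\<lambda>s. s / xdot n eps r xi s) has_real_derivative U') (at a)"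
  shows "has_planar_bracket (Ham n eps r xi) (Gfun n eps r xi) a y p q 0"
proof -
  define U where "U s = s / xdot n eps r xi s" for s
  have U: "(U has_real_derivative U') (at a)"
    using assms by (simp add: U_def[abs_def])
  have Ham: "Ham n eps r xi = Ham_of U"
    by (simp add: Ham_eq_Ham_of U_def[abs_def])
  have "Gfun n eps r xi = (\<lambda>s y t q. \<Sum>k\<in>{0..n}. Acoef n r (n - k) * Ham_of U s y t q ^ (n - k) * q ^ (2 * k))"
    by (simp add: Gfun_def Ham fun_eq_iff)
  moreover have "has_planar_bracket (Ham_of U)
      (\<lambda>s y t q. \<Sum>k\<in>{0..n}. Acoef n r (n - k) * Ham_of U s y t q ^ (n - k) * q ^ (2 * k)) a y p q
      (\<Sum>k\<in>{0..n}. - 2 * U a * (U a * p) * 0 * Ham_of U a y p q ^ (n - k) * q ^ (2 * k))"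
    by (intro has_planar_bracket_sum finite_atLeastAtMost has_planar_bracket_Ham_of_power[OF U DERIV_const])
  ultimately show ?thesis
    by (simp add: Ham)
qed

lemma has_planar_bracket_Q1fun:
  assumes U': "((\<lambda>s. s / xdot n eps r xi s) has_real_derivative U') (at a)"
    and pos: "\<forall>i\<in>{1..n}. Delta eps r i a > 0" and "xdot n eps r xi a \<noteq> 0"
  shows "has_planar_bracket (Ham n eps r xi) (Q1fun n eps r xi) a y p q (2 * a * q * Gfun n eps r xi a y p q)"
proof -
  define U where "U s = s / xdot n eps r xi s" for s
  define H where "H = Ham_of U a y p q"
  define b where "b k = btil n eps r xi k" for k
  define b' where "b' k = deriv (b k) a" for k
  have U: "(U has_real_derivative U') (at a)"
    using U' by (simp add: U_def[abs_def])
  have Ham: "Ham n eps r xi = Ham_of U"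
    by (simp add: Ham_eq_Ham_of U_def[abs_def])
  have b': "(b k has_real_derivative b' k) (at a)" for k
    unfolding b'_def b_def DERIV_deriv_iff_has_field_derivative
    using has_real_derivative_btil[OF pos] by blast
  have Q1fun: "Q1fun n eps r xi
      = (\<lambda>s y t q. \<Sum>k\<in>{1..n}. b k s * Ham_of U s y t q ^ (n - k) * (U s * t) * q ^ (2 * k - 1))"
    by (simp add: Q1fun_def Ham PiF_def U_def b_def fun_eq_iff)
  have bracket: "has_planar_bracket (Ham_of U)
      (\<lambda>s y t q. \<Sum>k\<in>{1..n}. b k s * Ham_of U s y t q ^ (n - k) * (U s * t) * q ^ (2 * k - 1)) a y p q
      (\<Sum>k\<in>{1..n}. H ^ (n - k) * U a * (b k a * q\<^sup>2 - 2 * (U a * p)\<^sup>2 * b' k) * q ^ (2 * k - 1))"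
    unfolding H_def
    by (intro has_planar_bracket_sum finite_atLeastAtMost has_planar_bracket_Ham_of_Pi_power[OF U b'])
  have "(\<Sum>k\<in>{1..n}. H ^ (n - k) * U a * (b k a * q\<^sup>2 - 2 * (U a * p)\<^sup>2 * b' k) * q ^ (2 * k - 1))
      = U a * (\<Sum>k=1..n. q ^ (2 * k - 1) * H ^ (n - k) * (b k a * q\<^sup>2 - 2 * (H - a * q\<^sup>2) * b' k))"
    by (simp add: sum_distrib_left H_def Ham_of_def mult_ac)
  also have "(\<Sum>k=1..n. q ^ (2 * k - 1) * H ^ (n - k) * (b k a * q\<^sup>2 - 2 * (H - a * q\<^sup>2) * b' k))
      = 2 * xdot n eps r xi a * q * Gfun n eps r xi a y p q"
    unfolding Gfun_def Ham H_def[symmetric]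
    by (rule sum_recurrence_telescope)
      (simp_all add: b'_def b_def btil_0 btil_Suc_top btil_recurrence[OF pos])
  also have "U a * (2 * xdot n eps r xi a * q * Gfun n eps r xi a y p q) = 2 * a * q * Gfun n eps r xi a y p q"
    using \<open>xdot n eps r xi a \<noteq> 0\<close> by (simp add: U_def)
  finally show ?thesis
    using Q1fun bracket by (simp add: Ham)
qed

lemma has_planar_bracket_Q2fun:
  assumes U': "((\<lambda>s. s / xdot n eps r xi s) has_real_derivative U') (at a)"
    and pos: "\<forall>i\<in>{1..n}. Delta eps r i a > 0" and "xdot n eps r xi a \<noteq> 0"
  shows "has_planar_bracket (Ham n eps r xi) (Q2fun n eps r xi) a y p q (2 * a * q * Q1fun n eps r xi a y p q)"
proof -
  define U where "U s = s / xdot n eps r xi s" for s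
  define H where "H = Ham_of U a y p q"
  define X where "X = xdot n eps r xi a"
  have U: "(U has_real_derivative U') (at a)"
    using U' by (simp add: U_def[abs_def])
  have Ham: "Ham n eps r xi = Ham_of U"
    by (simp add: Ham_eq_Ham_of U_def[abs_def])
  have "Q2fun n eps r xi
      = (\<lambda>s y t q. \<Sum>k\<in>{1..n}. ctil n eps r xi k s * Ham_of U s y t q ^ (n - k) * q ^ (2 * k))"
    by (simp add: Q2fun_def Ham fun_eq_iff)
  moreover have "has_planar_bracket (Ham_of U)
      (\<lambda>s y t q. \<Sum>k\<in>{1..n}. ctil n eps r xi k s * Ham_of U s y t q ^ (n - k) * q ^ (2 * k)) a y p q
      (\<Sum>k\<in>{1..n}. - 2 * U a * (U a * p) * (- X * btil n eps r xi k a) * H ^ (n - k) * q ^ (2 * k))"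
    unfolding H_def X_def
    by (intro has_planar_bracket_sum finite_atLeastAtMost
        has_planar_bracket_Ham_of_power[OF U has_real_derivative_ctil[OF pos]])
  moreover have "(\<Sum>k\<in>{1..n}. - 2 * U a * (U a * p) * (- X * btil n eps r xi k a) * H ^ (n - k) * q ^ (2 * k))
      = 2 * a * q * Q1fun n eps r xi a y p q"
    unfolding Q1fun_def sum_distrib_left
  proof (rule sum.cong[OF refl])
    fix k assume "k \<in> {1..n}"
    then have "q ^ (2 * k) = q * q ^ (2 * k - 1)"
      by (simp flip: power_Suc)
    moreover have "U a * X = a"
      using \<open>xdot n eps r xi a \<noteq> 0\<close> by (simp add: U_def X_def)
    ultimately show "- 2 * U a * (U a * p) * (- X * btil n eps r xi k a) * H ^ (n - k) * q ^ (2 * k)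
        = 2 * a * q * (btil n eps r xi k a * Ham n eps r xi a y p q ^ (n - k)
          * PiF n eps r xi a y p q * q ^ (2 * k - 1))"
      by (simp add: Ham H_def PiF_def U_def[symmetric] algebra_simps)
  qed
  ultimately show ?thesis
    by (simp add: Ham)
qed

lemma S1fun_has_y_derivative:
  "((\<lambda>z. S1fun n eps r xi a z p q) has_real_derivative Gfun n eps r xi a y p q) (at y)"
proof -
  have "(\<lambda>z. S1fun n eps r xi a z p q) = (\<lambda>z. Q1fun n eps r xi a y p q + z * Gfun n eps r xi a y p q)"
    by (simp add: S1fun_def Q1fun_def Gfun_def Ham_def PiF_def fun_eq_iff)
  then show ?thesis
    by (auto intro!: derivative_eq_intros)
qed

lemma S2fun_has_y_derivative:
  "((\<lambda>z. S2fun n eps r xi a z p q) has_real_derivative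
      Q1fun n eps r xi a y p q + y * Gfun n eps r xi a y p q) (at y)"
proof -
  have "(\<lambda>z. S2fun n eps r xi a z p q) = (\<lambda>z. Q2fun n eps r xi a y p q + z * Q1fun n eps r xi a y p q
      + z\<^sup>2 / 2 * Gfun n eps r xi a y p q)"
    by (simp add: S2fun_def Q2fun_def Q1fun_def Gfun_def Ham_def PiF_def fun_eq_iff)
  then show ?thesis
    by (auto intro!: derivative_eq_intros simp: power2_eq_square)
qed

lemma Ham_independent_of_y: "Ham n eps r xi a z p q = Ham n eps r xi a y p q"
  by (simp add: Ham_def PiF_def)

lemma poisson_Ham_eq_planar_bracket:
  assumes "has_planar_bracket (Ham n eps r xi) g a y p q v"
    and "((\<lambda>z. g a z p q) has_real_derivative gy) (at y)"
  shows "poisson (Ham n eps r xi) g a y p q = v - 2 * a * q * gy"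
  using poisson_eq_planar_bracket[OF assms(1) Ham_independent_of_y assms(2)]
  by (simp add: Ham_eq_Ham_of pd_Ham_of)

lemma poisson_Ham_PyF: "poisson (Ham n eps r xi) PyF a y p q = 0"
proof -
  have "has_planar_bracket (Ham n eps r xi) PyF a y p q 0"
    by (auto simp: has_planar_bracket_def PyF_def intro!: exI[of _ 0])
  moreover have "((\<lambda>z. PyF a z p q) has_real_derivative 0) (at y)"
    by (simp add: PyF_def)
  ultimately show ?thesis
    by (simp add: poisson_Ham_eq_planar_bracket)
qed

lemma poisson_Ham_S1fun:
  assumes "((\<lambda>s. s / xdot n eps r xi s) has_real_derivative U') (at a)"
    and "\<forall>i\<in>{1..n}. Delta eps r i a > 0" and "xdot n eps r xi a \<noteq> 0"
  shows "poisson (Ham n eps r xi) (S1fun n eps r xi) a y p q = 0"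
proof -
  have "S1fun n eps r xi = (\<lambda>a y p q. Q1fun n eps r xi a y p q + (\<lambda>y q. y) y q * Gfun n eps r xi a y p q)"
    by (simp add: S1fun_def fun_eq_iff)
  then have "has_planar_bracket (Ham n eps r xi) (S1fun n eps r xi) a y p q
      (2 * a * q * Gfun n eps r xi a y p q + y * 0)"
    using has_planar_bracket_add[OF has_planar_bracket_Q1fun[OF assms]
        has_planar_bracket_cmult[OF has_planar_bracket_Gfun[OF assms(1)]]]
    by simp
  from poisson_Ham_eq_planar_bracket[OF this S1fun_has_y_derivative]
  show ?thesis
    by simp
qed

lemma poisson_Ham_S2fun:
  assumes "((\<lambda>s. s / xdot n eps r xi s) has_real_derivative U') (at a)"
    and "\<forall>i\<in>{1..n}. Delta eps r i a > 0" and "xdot n eps r xi a \<noteq> 0"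
  shows "poisson (Ham n eps r xi) (S2fun n eps r xi) a y p q = 0"
proof -
  have "S2fun n eps r xi = (\<lambda>a y p q. Q2fun n eps r xi a y p q + (\<lambda>y q. y) y q * Q1fun n eps r xi a y p q
      + (\<lambda>y q. y\<^sup>2 / 2) y q * Gfun n eps r xi a y p q)"
    by (simp add: S2fun_def fun_eq_iff)
  then have "has_planar_bracket (Ham n eps r xi) (S2fun n eps r xi) a y p q
      (2 * a * q * Q1fun n eps r xi a y p q + y * (2 * a * q * Gfun n eps r xi a y p q) + y\<^sup>2 / 2 * 0)"
    using has_planar_bracket_add[OF has_planar_bracket_add[OF has_planar_bracket_Q2fun[OF assms]
          has_planar_bracket_cmult[where c = "\<lambda>y q. y", OF has_planar_bracket_Q1fun[OF assms]]]
        has_planar_bracket_cmult[where c = "\<lambda>y q. y\<^sup>2 / 2", OF has_planar_bracket_Gfun[OF assms(1)]]]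
    by simp
  from poisson_Ham_eq_planar_bracket[OF this S2fun_has_y_derivative]
  show ?thesis
    by (simp add: algebra_simps)
qed

section \<open>Functional independence\<close>

lemma wedge3_comp_PyF:
  assumes "pd 1 f a y p q = 0"
  shows "wedge3_comp f PyF g 1 2 3 a y p q = pd 2 f a y p q * pd 1 g a y p q"
  using assms by (simp add: wedge3_comp_def pd_def PyF_def[abs_def])

lemma Gfun_at_Py_0: "Gfun n eps r xi a y p 0 = Ham n eps r xi a y p 0 ^ n"
  by (auto simp: Gfun_def sum.atLeast_Suc_atMost Acoef_top intro!: sum.neutral)

lemma Q1fun_at_Py_0: "Q1fun n eps r xi a y p 0 = 0"
  by (auto simp: Q1fun_def intro!: sum.neutral)

lemma pd_1_S1fun: "pd 1 (S1fun n eps r xi) a y p q = Gfun n eps r xi a y p q"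
  using DERIV_imp_deriv[OF S1fun_has_y_derivative] by (simp add: pd_def)

lemma pd_1_S2fun: "pd 1 (S2fun n eps r xi) a y p q = Q1fun n eps r xi a y p q + y * Gfun n eps r xi a y p q"
  using DERIV_imp_deriv[OF S2fun_has_y_derivative] by (simp add: pd_def)

lemma wedge3_nonzero_Ham_PyF:
  assumes "a \<noteq> 0" "xdot n eps r xi a \<noteq> 0" and "pd 1 g a y 1 0 = Ham n eps r xi a y 1 0 ^ n"
  shows "wedge3_nonzero (Ham n eps r xi) PyF g a y 1 0"
proof -
  define u where "u = a / xdot n eps r xi a"
  have "u \<noteq> 0"
    using assms(1,2) by (simp add: u_def)
  have "pd 1 (Ham n eps r xi) a y 1 0 = 0"
    unfolding Ham_eq_Ham_of by (rule pd_Ham_of)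
  from wedge3_comp_PyF[OF this]
  have "wedge3_comp (Ham n eps r xi) PyF g 1 2 3 a y 1 0 = 2 * u * u * (u\<^sup>2) ^ n"
    using assms(3) by (simp add: Ham_eq_Ham_of pd_Ham_of Ham_of_def u_def)
  with \<open>u \<noteq> 0\<close> show ?thesis
    unfolding wedge3_nonzero_def by (intro exI[of _ 1] exI[of _ 2] exI[of _ 3]) simp
qed

theorem theorem1:
  fixes n :: nat and r eps xi :: "nat \<Rightarrow> real" and I :: "real set"
  assumes "n \<ge> 2"
    and "inj_on r {1..n}"
    and "\<forall>i\<in>{1..n}. eps i = 1 \<or> eps i = -1"
    and "open I" and "is_interval I" and "I \<noteq> {}" and "I \<subseteq> {0<..}"
    and "\<forall>t\<in>I. \<forall>i\<in>{1..n}. Delta eps r i t > 0"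
    and "\<forall>t\<in>I. xdot n eps r xi t \<noteq> 0"
  shows "(\<forall>t\<in>I. \<forall>y p q.
            poisson (Ham n eps r xi) PyF t y p q = 0
          \<and> poisson (Ham n eps r xi) (S1fun n eps r xi) t y p q = 0
          \<and> poisson (Ham n eps r xi) (S2fun n eps r xi) t y p q = 0)
       \<and> (\<exists>t\<in>I. \<exists>y p q. wedge3_nonzero (Ham n eps r xi) PyF (S1fun n eps r xi) t y p q)
       \<and> (\<exists>t\<in>I. \<exists>y p q. wedge3_nonzero (Ham n eps r xi) PyF (S2fun n eps r xi) t y p q)"
proof (intro conjI ballI allI)
  fix t y p q assume "t \<in> I"
  then have pos: "\<forall>i\<in>{1..n}. Delta eps r i t > 0" and xdot: "xdot n eps r xi t \<noteq> 0"
    using assms(8,9) by blast+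
  obtain D where "(xdot n eps r xi has_real_derivative D) (at t)"
    using xdot_differentiable[OF assms(4) \<open>t \<in> I\<close> assms(8)] by (auto simp: real_differentiable_def)
  from DERIV_divide[OF DERIV_ident this xdot]
  obtain U' where U': "((\<lambda>s. s / xdot n eps r xi s) has_real_derivative U') (at t)"
    by blast
  show "poisson (Ham n eps r xi) PyF t y p q = 0"
    by (rule poisson_Ham_PyF)
  show "poisson (Ham n eps r xi) (S1fun n eps r xi) t y p q = 0"
    using U' pos xdot by (rule poisson_Ham_S1fun)
  show "poisson (Ham n eps r xi) (S2fun n eps r xi) t y p q = 0"
    using U' pos xdot by (rule poisson_Ham_S2fun)
next
  obtain t where "t \<in> I" "t \<noteq> 0" "xdot n eps r xi t \<noteq> 0"
    using assms(6,7,9) by fastforce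
  moreover have "pd 1 (S1fun n eps r xi) t 1 1 0 = Ham n eps r xi t 1 1 0 ^ n"
    "pd 1 (S2fun n eps r xi) t 1 1 0 = Ham n eps r xi t 1 1 0 ^ n"
    by (simp_all only: pd_1_S1fun pd_1_S2fun Gfun_at_Py_0 Q1fun_at_Py_0 mult_1 add_0)
  ultimately show "\<exists>t\<in>I. \<exists>y p q. wedge3_nonzero (Ham n eps r xi) PyF (S1fun n eps r xi) t y p q"
    "\<exists>t\<in>I. \<exists>y p q. wedge3_nonzero (Ham n eps r xi) PyF (S2fun n eps r xi) t y p q"
    using wedge3_nonzero_Ham_PyF by blast+
qed

end
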